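(* Let $r_1,\dots,r_n\in\mathbb R$ and $r=\mathrm{diag}(r_1,\dots,r_n)$. For each $1\le i,k\le n$, the polynomials $\sigma_k(r+tI)$ (of degree $k$) and $q_{i,k}(t)$ (of degree $k-1$) have only real roots.
   Context: $\sigma_k(r+tI)=\sum_{i_1<\cdots<i_k}(t+r_{i_1})\cdots(t+r_{i_k})$, and $q_{i,k}(t)=\sum_{j=0}^{k-1}(-1)^j\sigma_{k-1-j}(r+tI)(t+r_i)^j$ with $\sigma_0=1$. *)

theory Defs
  imports Complex_Main "HOL-Computational_Algebra.Polynomial"
begin

text \<open>The polynomial in t given by sigma_k(r + tI) for r = diag(r_1,...,r_n):
  sum over k-element subsets S of {1..n} of the product of (t + r_i), i in S.\<close>
definition sigma_poly :: "(nat \<Rightarrow> real) \<Rightarrow> nat \<Rightarrow> nat \<Rightarrow> real poly" where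
  "sigma_poly r n k = (\<Sum>S\<in>{S. S \<subseteq> {1..n} \<and> card S = k}. \<Prod>i\<in>S. [:r i, 1:])"

definition q_poly :: "(nat \<Rightarrow> real) \<Rightarrow> nat \<Rightarrow> nat \<Rightarrow> nat \<Rightarrow> real poly" where
  "q_poly r n i k = (\<Sum>j<k. smult ((-1) ^ j) (sigma_poly r n (k - 1 - j) * [:r i, 1:] ^ j))"

definition only_real_roots :: "real poly \<Rightarrow> bool" where
  "only_real_roots p \<longleftrightarrow> (\<forall>z::complex. poly (map_poly complex_of_real p) z = 0 \<longrightarrow> z \<in> \<real>)"

end

theory Submission
  imports Defs "HOL-Computational_Algebra.Fundamental_Theorem_Algebra"
begin

text \<open>Write \<open>e\<^sub>k(A)\<close> for the \<open>k\<close>-th elementary symmetric polynomial in the linear factors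
  \<open>t + r\<^sub>a\<close>, \<open>a \<in> A\<close>. The top one, \<open>\<Prod>\<^sub>a (t + r\<^sub>a)\<close>, visibly has only real roots, and
  \<open>e\<^sub>k\<^sub>+\<^sub>1(A)' = (|A| - k) e\<^sub>k(A)\<close>. The derivative of a real-rooted polynomial is again
  real-rooted (the imaginary part of \<open>p'/p\<close> at \<open>z\<close> is \<open>-Im z\<close> times a positive number), so
  downward induction on \<open>k\<close> shows that every \<open>e\<^sub>k(A)\<close> is real-rooted of degree \<open>k\<close>.
  For \<open>q\<^sub>i\<^sub>,\<^sub>k\<close>, the recurrence \<open>e\<^sub>k(A \<union> {i}) = e\<^sub>k(A) + (t + r\<^sub>i) e\<^sub>k\<^sub>-\<^sub>1(A)\<close> makes
  the alternating sum telescope to \<open>q\<^sub>i\<^sub>,\<^sub>k = e\<^sub>k\<^sub>-\<^sub>1({1..n} - {i})\<close>.\<close>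

lemma map_poly_of_real_mult:
  "map_poly (of_real :: real \<Rightarrow> complex) (p * q) = map_poly of_real p * map_poly of_real q"
  by (rule poly_eqI) (simp add: coeff_map_poly coeff_mult of_real_sum)

lemma map_poly_of_real_prod:
  "map_poly (of_real :: real \<Rightarrow> complex) (\<Prod>i\<in>A. f i) = (\<Prod>i\<in>A. map_poly of_real (f i))"
  by (induction A rule: infinite_finite_induct) (simp_all add: map_poly_of_real_mult)

lemma map_poly_of_real_pderiv:
  "map_poly (of_real :: real \<Rightarrow> complex) (pderiv p) = pderiv (map_poly of_real p)"
  by (rule poly_eqI) (simp add: coeff_map_poly coeff_pderiv)

lemma poly_pderiv_prod_mset_linear:
  fixes M :: "complex multiset"
  assumes "z \<notin># M"
  shows "poly (pderiv (\<Prod>x\<in>#M. [:-x, 1:])) z =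
         (\<Sum>x\<in>#M. 1 / (z - x)) * poly (\<Prod>x\<in>#M. [:-x, 1:]) z"
  using assms
proof (induction M)
  case empty
  then show ?case by simp
next
  case (add x M)
  let ?q = "\<Prod>x\<in>#M. [:-x, 1:]"
  have "z \<noteq> x" using add.prems by auto
  have "pderiv [:-x, 1:] = 1" by (simp add: pderiv_pCons)
  then have "poly (pderiv ([:-x, 1:] * ?q)) z = (z - x) * poly (pderiv ?q) z + poly ?q z"
    by (simp only: pderiv_mult) (simp add: algebra_simps)
  also have "\<dots> = (1 / (z - x) + (\<Sum>x\<in>#M. 1 / (z - x))) * ((z - x) * poly ?q z)"
    using add \<open>z \<noteq> x\<close> by (simp add: field_simps)
  also have "(z - x) * poly ?q z = poly ([:-x, 1:] * ?q) z"
    by (simp add: algebra_simps)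
  finally show ?case
    by (simp only: prod_mset.add_mset image_mset_add_mset sum_mset.add_mset)
qed

lemma Im_sum_mset_inverse_diff:
  assumes "\<forall>x\<in>#M. x \<in> \<real>"
  shows "Im (\<Sum>x\<in>#M. 1 / (z - x)) = - Im z * (\<Sum>x\<in>#M. 1 / (cmod (z - x))^2)"
  using assms
proof (induction M)
  case empty
  then show ?case by simp
next
  case (add x M)
  then have "Im x = 0" by (auto simp: complex_is_Real_iff)
  then have "Im (1 / (z - x)) = - Im z * (1 / (cmod (z - x))^2)"
    by (simp add: Im_divide cmod_power2 divide_simps)
  with add show ?case by (simp add: algebra_simps)
qed

lemma pderiv_root_real_if_roots_real:
  fixes p :: "complex poly"
  assumes roots: "\<And>z. poly p z = 0 \<Longrightarrow> z \<in> \<real>" and deg: "degree p \<ge> 1"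
    and z: "poly (pderiv p) z = 0"
  shows "z \<in> \<real>"
proof (cases "poly p z = 0")
  case True
  then show ?thesis using roots by blast
next
  case False
  define M where "M = proots p"
  define q where "q = (\<Prod>x\<in>#M. [:-x, 1:])"
  have "p \<noteq> 0" using deg by auto
  then have p_eq: "p = smult (lead_coeff p) q" and "lead_coeff p \<noteq> 0"
    using complex_poly_decompose_multiset[of p] by (simp_all add: q_def M_def)
  have M_real: "\<forall>x\<in>#M. x \<in> \<real>" using roots \<open>p \<noteq> 0\<close> by (auto simp: M_def)
  have "M \<noteq> {#}" using size_proots_complex[of p] deg by (auto simp: M_def)
  then obtain x N where M: "M = add_mset x N" by (metis multiset_cases)
  have "z \<notin># M" using False \<open>p \<noteq> 0\<close> by (auto simp: M_def)
  have "poly q z \<noteq> 0" using False by (subst (asm) p_eq) simp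
  moreover have "poly (pderiv q) z = 0"
    using z \<open>lead_coeff p \<noteq> 0\<close> by (subst (asm) p_eq) (simp add: pderiv_smult)
  ultimately have "(\<Sum>x\<in>#M. 1 / (z - x)) = 0"
    using poly_pderiv_prod_mset_linear[OF \<open>z \<notin># M\<close>] by (simp add: q_def)
  then have "Im z * (\<Sum>x\<in>#M. 1 / (cmod (z - x))^2) = 0"
    using Im_sum_mset_inverse_diff[OF M_real, of z] by simp
  moreover have "(\<Sum>x\<in>#M. 1 / (cmod (z - x))^2) > 0"
  proof -
    have "0 < 1 / (cmod (z - x))^2" using \<open>z \<notin># M\<close> by (simp add: M)
    moreover have "0 \<le> (\<Sum>y\<in>#N. 1 / (cmod (z - y))^2)"
      using sum_mset_mono[of N "\<lambda>_. 0" "\<lambda>y. 1 / (cmod (z - y))^2"] by simp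
    ultimately show ?thesis by (auto simp: M intro!: add_pos_nonneg)
  qed
  ultimately show ?thesis by (simp add: complex_is_Real_iff)
qed

lemma only_real_roots_pderiv:
  assumes "only_real_roots p" "degree p \<ge> 1"
  shows "only_real_roots (pderiv p)"
  using assms pderiv_root_real_if_roots_real[of "map_poly of_real p"]
  by (auto simp: only_real_roots_def degree_map_poly map_poly_of_real_pderiv)

lemma only_real_roots_smult_iff:
  "c \<noteq> 0 \<Longrightarrow> only_real_roots (smult c p) \<longleftrightarrow> only_real_roots p"
  by (simp add: only_real_roots_def map_poly_smult)

lemma only_real_roots_prod_linear: "only_real_roots (\<Prod>i\<in>A. [:r i, 1:])"
proof (cases "finite A")
  case True
  then show ?thesis
    by (auto simp: only_real_roots_def map_poly_of_real_prod poly_prod map_poly_pCons add_eq_0_iff2)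
      (metis Reals_minus_iff Reals_of_real)
next
  case False
  then show ?thesis by (simp add: only_real_roots_def)
qed

definition esym_poly :: "(nat \<Rightarrow> real) \<Rightarrow> nat set \<Rightarrow> nat \<Rightarrow> real poly" where
  "esym_poly r A k = (\<Sum>S\<in>{S. S \<subseteq> A \<and> card S = k}. \<Prod>i\<in>S. [:r i, 1:])"

lemma sigma_poly_eq_esym_poly: "sigma_poly r n k = esym_poly r {1..n} k"
  by (simp add: sigma_poly_def esym_poly_def)

lemma esym_poly_0 [simp]: "finite A \<Longrightarrow> esym_poly r A 0 = 1"
  by (simp add: esym_poly_def Collect_conv_if rev_finite_subset[of A] card_eq_0_iff cong: conj_cong)

lemma esym_poly_eq_0:
  assumes "finite A" "card A < k"
  shows "esym_poly r A k = 0"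
proof -
  have "card S \<noteq> k" if "S \<subseteq> A" for S
    using card_mono[OF assms(1) that] assms(2) by simp
  then have "{S. S \<subseteq> A \<and> card S = k} = {}"
    by blast
  then show ?thesis
    unfolding esym_poly_def by (simp only: sum.empty)
qed

lemma esym_poly_card:
  assumes "finite A"
  shows "esym_poly r A (card A) = (\<Prod>i\<in>A. [:r i, 1:])"
proof -
  have "{S. S \<subseteq> A \<and> card S = card A} = {A}"
    using card_subset_eq[OF assms] by auto
  then show ?thesis by (simp add: esym_poly_def)
qed

lemma subsets_insert_card_Suc:
  assumes "finite A" "a \<notin> A"
  shows "{S. S \<subseteq> insert a A \<and> card S = Suc k} =
         {S. S \<subseteq> A \<and> card S = Suc k} \<union> insert a ` {S. S \<subseteq> A \<and> card S = k}"
proof (intro equalityI subsetI)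
  fix S assume S: "S \<in> {S. S \<subseteq> insert a A \<and> card S = Suc k}"
  then have "finite S" using assms(1) finite_subset by auto
  show "S \<in> {S. S \<subseteq> A \<and> card S = Suc k} \<union> insert a ` {S. S \<subseteq> A \<and> card S = k}"
  proof (cases "a \<in> S")
    case True
    then have "S = insert a (S - {a})" "S - {a} \<subseteq> A" "card (S - {a}) = k"
      using S \<open>finite S\<close> by auto
    then show ?thesis by blast
  next
    case False
    then show ?thesis using S by (auto simp: subset_insert)
  qed
next
  fix S assume "S \<in> {S. S \<subseteq> A \<and> card S = Suc k} \<union> insert a ` {S. S \<subseteq> A \<and> card S = k}"
  then show "S \<in> {S. S \<subseteq> insert a A \<and> card S = Suc k}"
    using assms by (auto simp: card_insert_if finite_subset)
qed

lemma esym_poly_insert: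
  assumes "finite A" "a \<notin> A"
  shows "esym_poly r (insert a A) (Suc k) = esym_poly r A (Suc k) + [:r a, 1:] * esym_poly r A k"
proof -
  have inj: "inj_on (insert a) {S. S \<subseteq> A \<and> card S = k}"
    using assms by (intro inj_onI) (metis insert_ident mem_Collect_eq subsetD)
  have "esym_poly r (insert a A) (Suc k) = esym_poly r A (Suc k) +
      (\<Sum>S\<in>insert a ` {S. S \<subseteq> A \<and> card S = k}. \<Prod>i\<in>S. [:r i, 1:])"
    unfolding esym_poly_def subsets_insert_card_Suc[OF assms]
    using assms by (intro sum.union_disjoint) auto
  also have "(\<Sum>S\<in>insert a ` {S. S \<subseteq> A \<and> card S = k}. \<Prod>i\<in>S. [:r i, 1:]) =
      (\<Sum>S\<in>{S. S \<subseteq> A \<and> card S = k}. [:r a, 1:] * (\<Prod>i\<in>S. [:r i, 1:]))"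
  proof (subst sum.reindex[OF inj], intro sum.cong refl)
    fix S assume "S \<in> {S. S \<subseteq> A \<and> card S = k}"
    then have "finite S" "a \<notin> S" using assms finite_subset by auto
    then show "((\<lambda>S. \<Prod>i\<in>S. [:r i, 1:]) \<circ> insert a) S = [:r a, 1:] * (\<Prod>i\<in>S. [:r i, 1:])"
      by simp
  qed
  also have "\<dots> = [:r a, 1:] * esym_poly r A k"
    by (simp add: esym_poly_def sum_distrib_left)
  finally show ?thesis .
qed

lemma pderiv_esym_poly:
  "finite A \<Longrightarrow> pderiv (esym_poly r A (Suc k)) = smult (of_nat (card A - k)) (esym_poly r A k)"
proof (induction A arbitrary: k rule: finite_induct)
  case empty
  then show ?case by (simp add: esym_poly_eq_0)
next
  case (insert a A)
  have "pderiv [:r a, 1:] = 1" by (simp add: pderiv_pCons)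
  then have "pderiv (esym_poly r (insert a A) (Suc k)) =
        smult (of_nat (card A - k)) (esym_poly r A k) +
        ([:r a, 1:] * pderiv (esym_poly r A k) + esym_poly r A k)"
    by (simp only: esym_poly_insert[OF insert.hyps] pderiv_add pderiv_mult insert.IH mult_1_right)
  also have "\<dots> = smult (of_nat (card (insert a A) - k)) (esym_poly r (insert a A) k)"
  proof (cases k)
    case 0
    then show ?thesis using insert by (simp add: algebra_simps one_pCons)
  next
    case (Suc m)
    have IH: "pderiv (esym_poly r A k) = smult (of_nat (card A - m)) (esym_poly r A m)"
      using insert Suc by simp
    show ?thesis
    proof (cases "k \<le> card A")
      case True
      then have "real (card A - m) = real (card A - k) + 1" using Suc by simp
      with insert Suc True show ?thesis
        by (simp add: esym_poly_insert IH algebra_simps smult_add_left smult_add_right del: of_nat_diff)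
    next
      case False
      then have "esym_poly r A k = 0" using insert esym_poly_eq_0 by simp
      with insert Suc False show ?thesis
        by (simp add: esym_poly_insert IH algebra_simps)
    qed
  qed
  finally show ?case .
qed

lemma degree_prod_linear: "degree (\<Prod>i\<in>S. [:c i, 1:] :: 'a::idom poly) = card S"
  by (simp add: degree_prod_eq_sum_degree)

lemma lead_coeff_prod_linear: "lead_coeff (\<Prod>i\<in>S. [:c i, 1:] :: 'a::idom poly) = 1"
  by (simp add: lead_coeff_prod)

lemma degree_esym_poly_le: "degree (esym_poly r A k) \<le> k"
  unfolding esym_poly_def
  by (cases "finite {S. S \<subseteq> A \<and> card S = k}") (auto intro!: degree_sum_le simp: degree_prod_linear)

lemma coeff_esym_poly:
  assumes "finite A"
  shows "coeff (esym_poly r A k) k = of_nat (card A choose k)"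
proof -
  have "coeff (esym_poly r A k) k = (\<Sum>S\<in>{S. S \<subseteq> A \<and> card S = k}. 1)"
    unfolding esym_poly_def coeff_sum
  proof (intro sum.cong refl)
    fix S assume "S \<in> {S. S \<subseteq> A \<and> card S = k}"
    then have "degree (\<Prod>i\<in>S. [:r i, 1:]) = k" by (simp add: degree_prod_linear)
    then show "coeff (\<Prod>i\<in>S. [:r i, 1:]) k = 1"
      using lead_coeff_prod_linear[of r S] by simp
  qed
  then show ?thesis by (simp add: n_subsets[OF assms])
qed

lemma degree_esym_poly:
  assumes "finite A" "k \<le> card A"
  shows "degree (esym_poly r A k) = k"
proof (rule antisym)
  show "degree (esym_poly r A k) \<le> k" by (rule degree_esym_poly_le)
  have "coeff (esym_poly r A k) k \<noteq> 0" using assms by (simp add: coeff_esym_poly)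
  then show "k \<le> degree (esym_poly r A k)" by (rule le_degree)
qed

lemma only_real_roots_esym_poly:
  assumes "finite A" "k \<le> card A"
  shows "only_real_roots (esym_poly r A k)"
  using assms(2)
proof (induction k rule: inc_induct)
  case base
  show ?case using assms(1) by (simp add: esym_poly_card only_real_roots_prod_linear)
next
  case (step k)
  have "only_real_roots (pderiv (esym_poly r A (Suc k)))"
    using step assms(1) by (intro only_real_roots_pderiv) (simp_all add: degree_esym_poly)
  with step show ?case
    by (simp add: pderiv_esym_poly[OF assms(1)] only_real_roots_smult_iff)
qed

lemma alternating_sum_esym_poly_insert:
  assumes "finite A" "a \<notin> A"
  shows "(\<Sum>j<Suc m. smult ((-1) ^ j) (esym_poly r (insert a A) (m - j) * [:r a, 1:] ^ j)) =
         esym_poly r A m"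
proof (induction m)
  case 0
  then show ?case using assms by simp
next
  case (Suc m)
  let ?x = "[:r a, 1:]"
  have "(\<Sum>j<Suc (Suc m). smult ((-1) ^ j) (esym_poly r (insert a A) (Suc m - j) * ?x ^ j))
      = esym_poly r (insert a A) (Suc m) +
        (\<Sum>j<Suc m. smult ((-1) ^ Suc j) (esym_poly r (insert a A) (m - j) * ?x ^ Suc j))"
    by (subst sum.lessThan_Suc_shift) simp
  also have "(\<Sum>j<Suc m. smult ((-1) ^ Suc j) (esym_poly r (insert a A) (m - j) * ?x ^ Suc j))
      = - (?x * (\<Sum>j<Suc m. smult ((-1) ^ j) (esym_poly r (insert a A) (m - j) * ?x ^ j)))"
    by (simp add: sum_distrib_left sum_negf[symmetric] algebra_simps)
  also have "\<dots> = - (?x * esym_poly r A m)"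
    using Suc by simp
  finally show ?case
    using esym_poly_insert[OF assms] by simp
qed

lemma q_poly_eq_esym_poly:
  assumes "i \<in> {1..n}" "k \<ge> 1"
  shows "q_poly r n i k = esym_poly r ({1..n} - {i}) (k - 1)"
proof -
  have "{1..n} = insert i ({1..n} - {i})" using assms(1) by blast
  then show ?thesis
    using alternating_sum_esym_poly_insert[where A="{1..n} - {i}" and a=i and m="k - 1"] assms(2)
    by (simp add: q_poly_def sigma_poly_eq_esym_poly)
qed

theorem lemma2p7:
  fixes r :: "nat \<Rightarrow> real" and n i k :: nat
  assumes "1 \<le> i" "i \<le> n" "1 \<le> k" "k \<le> n"
  shows "degree (sigma_poly r n k) = k \<and> only_real_roots (sigma_poly r n k) \<and>
         degree (q_poly r n i k) = k - 1 \<and> only_real_roots (q_poly r n i k)"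
proof -
  have q: "q_poly r n i k = esym_poly r ({1..n} - {i}) (k - 1)"
    using assms by (intro q_poly_eq_esym_poly) auto
  have "k - 1 \<le> card ({1..n} - {i})"
    using assms by simp
  then show ?thesis
    using assms unfolding q sigma_poly_eq_esym_poly
    by (simp add: degree_esym_poly only_real_roots_esym_poly)
qed

end
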